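(* Let $X \in \Lambda^2_{14} = \mathfrak{g}_2$ with $\operatorname{rank} X \leq 4$. Then there exists a $\mathrm{G}_2$-adapted frame $\mathcal{B} = \{e_1,\dots,e_7\}$ such that the matrix $[X]_{\mathcal{B}}$, whose $(i,j)$ entry is $X(e_i,e_j)$, has the form $$ [X]_{\mathcal{B}} = \begin{pmatrix} 0_{3\times 3} & 0_{3\times 4} \\ 0_{4\times 3} & Y \end{pmatrix}, \qquad Y = \begin{pmatrix} 0 & -a & -b & -c \\ a & 0 & -c & b \\ b & c & 0 & -a \\ c & -b & a & 0 \end{pmatrix} $$ for some $a,b,c\in\mathbb{R}$.
   Context: Equip $\mathbb{R}^7$ with its standard inner product, orientation and basis. Let $\varphi = e_{123} - e_{167} - e_{527} - e_{563} - e_{415} - e_{426} - e_{437}$ ($e_{ijk} = e_i\wedge e_j\wedge e_k$) and define $\times$ by $\langle u\times v,w\rangle = \varphi(u,v,w)$. A skew bilinear form $X$ is identified with the operator $X$ given by $X(a,b)=\langle X(a),b\rangle$. $\Lambda^2_{14}=\mathfrak{g}_2$ is the set of skew bilinear forms $X$ with $X(v\times w) = X(v)\times w + v\times X(w)$ for all $v,w$. A $\mathrm{G}_2$-adapted frame is an oriented orthonormal basis $\{e_1,\dots,e_7\}$ with $e_3 = e_1\times e_2$, $e_5 = e_1\times e_4$, $e_6 = e_2\times e_4$, $e_7 = e_3\times e_4$. *)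

theory Defs
  imports "HOL-Analysis.Analysis"
begin

text \<open>Vectors of R^7 are \<open>real^7\<close>; the standard basis vector e_i is \<open>axis i 1\<close>,
  where the index type 7 has elements 1,...,6,7 (with 7 = 0 in the index type).\<close>

definition std :: "7 \<Rightarrow> real^7" where
  "std i = axis i 1"

text \<open>e_{ijk}(u,v,w) = det of the 3x3 minor (rows i,j,k) of [u v w].\<close>
definition eijk :: "7 \<Rightarrow> 7 \<Rightarrow> 7 \<Rightarrow> real^7 \<Rightarrow> real^7 \<Rightarrow> real^7 \<Rightarrow> real" where
  "eijk i j k u v w =
     u$i * (v$j * w$k - v$k * w$j) - u$j * (v$i * w$k - v$k * w$i)
     + u$k * (v$i * w$j - v$j * w$i)"

definition phi :: "real^7 \<Rightarrow> real^7 \<Rightarrow> real^7 \<Rightarrow> real" where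
  "phi u v w = eijk 1 2 3 u v w - eijk 1 6 7 u v w - eijk 5 2 7 u v w - eijk 5 6 3 u v w
              - eijk 4 1 5 u v w - eijk 4 2 6 u v w - eijk 4 3 7 u v w"

definition g2cross :: "real^7 \<Rightarrow> real^7 \<Rightarrow> real^7" where
  "g2cross u v = (\<chi> k. phi u v (std k))"

definition skew_form :: "(real^7 \<Rightarrow> real^7 \<Rightarrow> real) \<Rightarrow> bool" where
  "skew_form X \<longleftrightarrow> bilinear X \<and> (\<forall>u v. X u v = - X v u)"

definition form_op :: "(real^7 \<Rightarrow> real^7 \<Rightarrow> real) \<Rightarrow> real^7 \<Rightarrow> real^7" where
  "form_op X a = (\<chi> j. X a (std j))"

definition in_g2 :: "(real^7 \<Rightarrow> real^7 \<Rightarrow> real) \<Rightarrow> bool" where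
  "in_g2 X \<longleftrightarrow> skew_form X \<and>
     (\<forall>v w. form_op X (g2cross v w) = g2cross (form_op X v) w + g2cross v (form_op X w))"

definition form_rank :: "(real^7 \<Rightarrow> real^7 \<Rightarrow> real) \<Rightarrow> nat" where
  "form_rank X = dim (range (form_op X))"

text \<open>Orientation: the matrix with rows f i has positive determinant (rows in the
  index order 7,1,...,6, a cyclic and hence even permutation of 1,...,7).\<close>
definition G2_adapted_frame :: "(7 \<Rightarrow> real^7) \<Rightarrow> bool" where
  "G2_adapted_frame f \<longleftrightarrow>
     (\<forall>i j. f i \<bullet> f j = (if i = j then 1 else 0)) \<and>
     det (\<chi> i. f i) > 0 \<and>
     f 3 = g2cross (f 1) (f 2) \<and> f 5 = g2cross (f 1) (f 4) \<and>
     f 6 = g2cross (f 2) (f 4) \<and> f 7 = g2cross (f 3) (f 4)"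

definition frame_matrix :: "(real^7 \<Rightarrow> real^7 \<Rightarrow> real) \<Rightarrow> (7 \<Rightarrow> real^7) \<Rightarrow> real^7^7" where
  "frame_matrix X f = (\<chi> i j. X (f i) (f j))"

definition blk :: "7 \<Rightarrow> nat" where
  "blk t = (if t = 4 then 0 else if t = 5 then 1 else if t = 6 then 2 else 3)"

definition normal_form :: "real \<Rightarrow> real \<Rightarrow> real \<Rightarrow> real^7^7" where
  "normal_form a b c = (\<chi> i j.
     if i \<in> {4,5,6,7} \<and> j \<in> {4,5,6,7}
     then [[0,-a,-b,-c],[a,0,-c,b],[b,c,0,-a],[c,-b,a,0]] ! blk i ! blk j
     else 0)"

end

theory Submission
  imports Defs
begin

text \<open>
  Since X is a derivation of the cross product, its kernel is closed under the cross product. A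
  skew form of rank at most 4 on R^7 has a kernel of dimension at least 3, so it contains an
  orthonormal pair u, v, and then also u \<times> v. Completing by a unit vector w orthogonal to
  u, v and u \<times> v gives the G2-adapted frame (u, v, u \<times> v, w, u \<times> w, v \<times> w, (u \<times> v) \<times> w).
  X vanishes on its first three vectors, and for x in the kernel the derivation rule gives
  X(x \<times> w, y) = - X(w, x \<times> y); the cross product table of the frame then forces the
  remaining 4 \<times> 4 block into the stated form with a = X(u \<times> w, w), b = X(v \<times> w, w) and
  c = X((u \<times> v) \<times> w, w).

  The only non-algebraic point is the orientation. The frame is orthonormal, so its determinant
  is \<plusminus>1 and depends continuously on the triple (u, v, w). Any two such triples are joined by
  a chain of explicit plane rotations, each a continuous path of such triples; since the triple
  (e1, e2, e4) produces the standard basis, the determinant is always 1.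
\<close>

lemma det_orthogonal_matrix_path_constant:
  fixes F :: "'a::topological_space \<Rightarrow> real^'n^'n"
  assumes "connected S" "continuous_on S F" "\<And>t. t \<in> S \<Longrightarrow> orthogonal_matrix (F t)"
    and "s \<in> S" "t \<in> S"
  shows "det (F s) = det (F t)"
proof -
  have "(\<lambda>t. det (F t)) constant_on S"
  proof (rule continuous_finite_range_constant[OF \<open>connected S\<close>])
    show "continuous_on S (\<lambda>t. det (F t))"
      unfolding det_def by (intro continuous_intros assms(2))
    have "(\<lambda>t. det (F t)) ` S \<subseteq> {-1, 1}" using det_orthogonal_matrix assms(3) by fastforce
    then show "finite ((\<lambda>t. det (F t)) ` S)" by (rule finite_subset) simp
  qed
  then show ?thesis using assms(4,5) unfolding constant_on_def by metis
qed

lemma exists_unit_orthogonal: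
  fixes S :: "'a::euclidean_space set"
  assumes "dim S < DIM('a)"
  obtains w where "w \<bullet> w = 1" "\<And>s. s \<in> S \<Longrightarrow> s \<bullet> w = 0"
proof -
  obtain x where "x \<noteq> 0" "\<And>y. y \<in> span S \<Longrightarrow> orthogonal x y"
    using orthogonal_to_subspace_exists[OF assms] by blast
  then show ?thesis
    using that[of "x /\<^sub>R norm x"]
    by (simp add: span_base orthogonal_def inner_commute power2_eq_square flip: power2_norm_eq_inner)
qed

lemma unit_vector_rotation:
  fixes a b c :: "'a::real_inner"
  assumes "a \<bullet> a = 1" "b \<bullet> b = 1" "c \<bullet> c = 1" "a \<bullet> c = 0"
  obtains \<theta> x where "x \<bullet> x = 1" "a \<bullet> x = 0" "b = cos \<theta> *\<^sub>R a + sin \<theta> *\<^sub>R x"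
    "\<And>z. z \<bullet> a = 0 \<Longrightarrow> z \<bullet> b = 0 \<Longrightarrow> z \<bullet> c = 0 \<Longrightarrow> z \<bullet> x = 0"
proof -
  define y where "y = b - (b \<bullet> a) *\<^sub>R a"
  have ay: "a \<bullet> y = 0" unfolding y_def using assms(1) by (simp add: inner_diff_right inner_commute)
  have "b \<bullet> b = (b \<bullet> a)\<^sup>2 + (norm y)\<^sup>2"
  proof -
    have "b = (b \<bullet> a) *\<^sub>R a + y" unfolding y_def by simp
    then have "b \<bullet> b = ((b \<bullet> a) *\<^sub>R a + y) \<bullet> ((b \<bullet> a) *\<^sub>R a + y)" by simp
    also have "\<dots> = (b \<bullet> a)\<^sup>2 + y \<bullet> y" using assms(1) ay
      by (simp add: inner_add_left inner_add_right inner_commute power2_eq_square)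
    finally show ?thesis by (simp add: power2_norm_eq_inner)
  qed
  then obtain \<theta> where \<theta>: "b \<bullet> a = cos \<theta>" "norm y = sin \<theta>"
    using assms(2) sincos_total_2pi by metis
  \<comment> \<open>If b = \<plusminus>a the rotation plane is not determined by a and b; c supplies it.\<close>
  define x where "x = (if y = 0 then c else y /\<^sub>R norm y)"
  show ?thesis
  proof (rule that[of x \<theta>])
    show "x \<bullet> x = 1" unfolding x_def using assms(3)
      by (simp add: power2_eq_square flip: power2_norm_eq_inner)
    show "a \<bullet> x = 0" unfolding x_def using assms(4) ay by simp
    have "sin \<theta> *\<^sub>R x = y"
    proof (cases "y = 0")
      case False
      then have "sin \<theta> \<noteq> 0" using \<theta>(2) by auto
      then show ?thesis using \<theta>(2) False by (simp add: x_def)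
    qed (use \<theta>(2) in \<open>simp add: x_def\<close>)
    then show "b = cos \<theta> *\<^sub>R a + sin \<theta> *\<^sub>R x" unfolding y_def using \<theta>(1) by simp
    fix z
    assume "z \<bullet> a = 0" "z \<bullet> b = 0" "z \<bullet> c = 0"
    then have "z \<bullet> y = 0" unfolding y_def by (simp add: inner_diff_right)
    with \<open>z \<bullet> c = 0\<close> show "z \<bullet> x = 0" unfolding x_def by simp
  qed
qed

lemma sphere_polar_coordinates:
  fixes \<alpha> \<beta> \<gamma> :: real
  assumes "\<alpha>\<^sup>2 + \<beta>\<^sup>2 + \<gamma>\<^sup>2 = 1"
  obtains \<theta> \<phi> where "\<alpha> = cos \<phi> * cos \<theta>" "\<beta> = cos \<phi> * sin \<theta>" "\<gamma> = sin \<phi>"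
proof -
  define \<rho> where "\<rho> = sqrt (\<alpha>\<^sup>2 + \<beta>\<^sup>2)"
  have \<rho>2: "\<rho>\<^sup>2 = \<alpha>\<^sup>2 + \<beta>\<^sup>2" unfolding \<rho>_def by simp
  obtain \<phi> where \<phi>: "\<rho> = cos \<phi>" "\<gamma> = sin \<phi>"
    using sincos_total_2pi[of \<rho> \<gamma>] assms \<rho>2 by auto
  obtain \<theta> where "\<alpha> = \<rho> * cos \<theta>" "\<beta> = \<rho> * sin \<theta>"
  proof (cases "\<rho> = 0")
    case True
    then have "\<alpha> = 0" "\<beta> = 0" using \<rho>2 by (simp_all add: sum_power2_eq_zero_iff)
    then show ?thesis using that[of 0] True by simp
  next
    case False
    have "(\<alpha> / \<rho>)\<^sup>2 + (\<beta> / \<rho>)\<^sup>2 = (\<alpha>\<^sup>2 + \<beta>\<^sup>2) / \<rho>\<^sup>2"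
      by (simp add: power_divide add_divide_distrib)
    then have "(\<alpha> / \<rho>)\<^sup>2 + (\<beta> / \<rho>)\<^sup>2 = 1" using False by (simp add: \<rho>2[symmetric])
    then obtain \<theta> where "\<alpha> / \<rho> = cos \<theta>" "\<beta> / \<rho> = sin \<theta>" using sincos_total_2pi by metis
    then show ?thesis using that[of \<theta>] False by (simp add: field_simps)
  qed
  then show ?thesis using that \<phi> by simp
qed

section \<open>Coordinates and the cross product on R^7\<close>

lemma exhaust_7:
  fixes x :: 7
  shows "x = 1 \<or> x = 2 \<or> x = 3 \<or> x = 4 \<or> x = 5 \<or> x = 6 \<or> x = 7"
proof (induct x)
  case (of_int z)
  then have "z = 0 \<or> z = 1 \<or> z = 2 \<or> z = 3 \<or> z = 4 \<or> z = 5 \<or> z = 6" by auto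
  then show ?case by (elim disjE) simp_all
qed

lemma forall_7: "(\<forall>i::7. P i) \<longleftrightarrow> P 1 \<and> P 2 \<and> P 3 \<and> P 4 \<and> P 5 \<and> P 6 \<and> P 7"
  by (metis exhaust_7)

lemma UNIV_7: "(UNIV :: 7 set) = {1, 2, 3, 4, 5, 6, 7}"
  using exhaust_7 by auto

lemma inner_vec7:
  "(x::real^7) \<bullet> y = x$1*y$1 + x$2*y$2 + x$3*y$3 + x$4*y$4 + x$5*y$5 + x$6*y$6 + x$7*y$7"
  unfolding inner_vec_def UNIV_7 by (simp add: add.assoc)

lemma vec7_eq_iff:
  "(x::real^7) = y \<longleftrightarrow>
     x$1 = y$1 \<and> x$2 = y$2 \<and> x$3 = y$3 \<and> x$4 = y$4 \<and> x$5 = y$5 \<and> x$6 = y$6 \<and> x$7 = y$7"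
  unfolding vec_eq_iff forall_7 ..

lemma std_nth: "std i $ j = (if j = i then 1 else 0)"
  unfolding std_def axis_def by simp

lemma inner_std_std: "std i \<bullet> std j = (if i = j then 1 else 0)"
  unfolding std_def by (simp add: inner_axis_axis)

lemma g2cross_nth:
  "g2cross u v $ 1 = u$2 * v$3 - u$3 * v$2 + u$4 * v$5 - u$5 * v$4 - u$6 * v$7 + u$7 * v$6"
  "g2cross u v $ 2 = - u$1 * v$3 + u$3 * v$1 + u$4 * v$6 + u$5 * v$7 - u$6 * v$4 - u$7 * v$5"
  "g2cross u v $ 3 = u$1 * v$2 - u$2 * v$1 + u$4 * v$7 - u$5 * v$6 + u$6 * v$5 - u$7 * v$4"
  "g2cross u v $ 4 = - u$1 * v$5 - u$2 * v$6 - u$3 * v$7 + u$5 * v$1 + u$6 * v$2 + u$7 * v$3"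
  "g2cross u v $ 5 = u$1 * v$4 - u$2 * v$7 + u$3 * v$6 - u$4 * v$1 - u$6 * v$3 + u$7 * v$2"
  "g2cross u v $ 6 = u$1 * v$7 + u$2 * v$4 - u$3 * v$5 - u$4 * v$2 + u$5 * v$3 - u$7 * v$1"
  "g2cross u v $ 7 = - u$1 * v$6 + u$2 * v$5 + u$3 * v$4 - u$4 * v$3 - u$5 * v$2 + u$6 * v$1"
  unfolding g2cross_def phi_def eijk_def std_nth vec_lambda_beta by simp_all

lemma bilinear_g2cross: "bilinear g2cross"
  unfolding bilinear_def linear_iff vec7_eq_iff
  by (simp add: g2cross_nth algebra_simps)

lemma g2cross_zero [simp]: "g2cross 0 v = 0" "g2cross u 0 = 0"
  by (simp_all add: bilinear_lzero[OF bilinear_g2cross] bilinear_rzero[OF bilinear_g2cross])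

lemmas g2cross_linear =
  bilinear_ladd[OF bilinear_g2cross] bilinear_radd[OF bilinear_g2cross]
  bilinear_lsub[OF bilinear_g2cross] bilinear_rsub[OF bilinear_g2cross]
  bilinear_lmul[OF bilinear_g2cross] bilinear_rmul[OF bilinear_g2cross]
  bilinear_lneg[OF bilinear_g2cross] bilinear_rneg[OF bilinear_g2cross]

lemma continuous_on_g2cross [continuous_intros]:
  fixes f g :: "'a::t2_space \<Rightarrow> real^7"
  shows "continuous_on S f \<Longrightarrow> continuous_on S g \<Longrightarrow> continuous_on S (\<lambda>t. g2cross (f t) (g t))"
  by (rule bilinear_continuous_on_compose[OF _ _ bilinear_g2cross])

lemma g2cross_commute: "g2cross v u = - g2cross u v"
  unfolding vec7_eq_iff by (simp add: g2cross_nth)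

lemma g2cross_self [simp]: "g2cross u u = 0"
  unfolding vec7_eq_iff by (simp add: g2cross_nth)

lemma inner_g2cross_swap: "g2cross u w \<bullet> v = - (g2cross u v \<bullet> w)"
  unfolding inner_vec7 g2cross_nth by (simp add: algebra_simps)

lemma inner_g2cross_left [simp]: "g2cross u v \<bullet> u = 0" "u \<bullet> g2cross u v = 0"
  unfolding inner_vec7 g2cross_nth by (simp_all add: algebra_simps)

lemma inner_g2cross_right [simp]: "g2cross u v \<bullet> v = 0" "v \<bullet> g2cross u v = 0"
  unfolding inner_vec7 g2cross_nth by (simp_all add: algebra_simps)

lemma inner_g2cross_g2cross:
  "g2cross u w \<bullet> g2cross v w = (u \<bullet> v) * (w \<bullet> w) - (u \<bullet> w) * (v \<bullet> w)"
  unfolding inner_vec7 g2cross_nth by (simp add: algebra_simps)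

lemma inner_g2cross_orthonormal:
  "u \<bullet> u = 1 \<Longrightarrow> v \<bullet> v = 1 \<Longrightarrow> u \<bullet> v = 0 \<Longrightarrow> g2cross u v \<bullet> g2cross u v = 1"
  using inner_g2cross_g2cross[of u v u] by simp

lemma g2cross_g2cross_self: "g2cross u (g2cross u w) = (u \<bullet> w) *\<^sub>R u - (u \<bullet> u) *\<^sub>R w"
  unfolding vec7_eq_iff by (simp add: g2cross_nth inner_vec7 algebra_simps)

lemma g2cross_assoc:
  "g2cross (g2cross x y) z + g2cross x (g2cross y z)
     = (2 * (x \<bullet> z)) *\<^sub>R y - (y \<bullet> z) *\<^sub>R x - (x \<bullet> y) *\<^sub>R z"
  unfolding vec7_eq_iff by (simp add: g2cross_nth inner_vec7 algebra_simps)

lemma g2cross_g2cross_orthonormal: "x \<bullet> x = 1 \<Longrightarrow> x \<bullet> y = 0 \<Longrightarrow> g2cross x (g2cross x y) = - y"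
  by (simp add: g2cross_g2cross_self)

lemma g2cross_assoc_orthogonal:
  "x \<bullet> y = 0 \<Longrightarrow> x \<bullet> z = 0 \<Longrightarrow> y \<bullet> z = 0 \<Longrightarrow> g2cross x (g2cross y z) = - g2cross (g2cross x y) z"
  using g2cross_assoc[of x y z] by (simp add: eq_neg_iff_add_eq_0 add.commute)

lemma g2cross_orthonormal_table:
  assumes "u \<bullet> u = 1" "v \<bullet> v = 1" "u \<bullet> v = 0"
  shows "g2cross v u = - g2cross u v" "g2cross u (g2cross u v) = - v" "g2cross v (g2cross u v) = u"
    "g2cross (g2cross u v) u = v" "g2cross (g2cross u v) v = - u"
proof -
  show vu: "g2cross v u = - g2cross u v" by (rule g2cross_commute)
  show uuv: "g2cross u (g2cross u v) = - v" using assms by (simp add: g2cross_g2cross_orthonormal)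
  have "g2cross v (g2cross v u) = - u" using assms by (simp add: g2cross_g2cross_orthonormal inner_commute)
  then show vuv: "g2cross v (g2cross u v) = u" by (simp add: vu bilinear_rneg[OF bilinear_g2cross])
  show "g2cross (g2cross u v) u = v" "g2cross (g2cross u v) v = - u"
    using uuv vuv g2cross_commute[of "g2cross u v"] by simp_all
qed

section \<open>Special triples and their frames\<close>

definition special_triple :: "real^7 \<Rightarrow> real^7 \<Rightarrow> real^7 \<Rightarrow> bool" where
  "special_triple u v w \<longleftrightarrow> u \<bullet> u = 1 \<and> v \<bullet> v = 1 \<and> w \<bullet> w = 1 \<and>
     u \<bullet> v = 0 \<and> u \<bullet> w = 0 \<and> v \<bullet> w = 0 \<and> g2cross u v \<bullet> w = 0"

definition g2_frame :: "real^7 \<Rightarrow> real^7 \<Rightarrow> real^7 \<Rightarrow> 7 \<Rightarrow> real^7" where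
  "g2_frame u v w i =
     (if i = 1 then u else if i = 2 then v else if i = 3 then g2cross u v
      else if i = 4 then w else if i = 5 then g2cross u w else if i = 6 then g2cross v w
      else g2cross (g2cross u v) w)"

lemma g2_frame_simps [simp]:
  "g2_frame u v w 1 = u" "g2_frame u v w 2 = v" "g2_frame u v w 3 = g2cross u v"
  "g2_frame u v w 4 = w" "g2_frame u v w 5 = g2cross u w" "g2_frame u v w 6 = g2cross v w"
  "g2_frame u v w 7 = g2cross (g2cross u v) w"
  unfolding g2_frame_def by simp_all

lemma special_triple_frame_orthonormal:
  assumes "special_triple u v w"
  shows "g2_frame u v w i \<bullet> g2_frame u v w j = (if i = j then 1 else 0)"
proof -
  let ?a = "g2cross u v"
  have uvw: "u \<bullet> u = 1" "v \<bullet> v = 1" "w \<bullet> w = 1" "u \<bullet> v = 0" "u \<bullet> w = 0" "v \<bullet> w = 0"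
    "?a \<bullet> w = 0" "w \<bullet> ?a = 0" using assms unfolding special_triple_def by (auto simp: inner_commute)
  have aa: "?a \<bullet> ?a = 1" using inner_g2cross_orthonormal uvw by blast
  have uva: "x \<bullet> w = 0" "w \<bullet> x = 0" if "x \<in> {u, v, ?a, - u, - v, - ?a}" for x
    using that uvw by (auto simp: inner_commute)
  note table = g2cross_orthonormal_table[OF uvw(1,2,4)]
  have mixed: "x \<bullet> g2cross y w = 0" "g2cross y w \<bullet> x = 0" if "x \<in> {u, v, ?a}" "y \<in> {u, v, ?a}" for x y
  proof -
    have "g2cross y x \<in> {0, u, v, ?a, - u, - v, - ?a}" using that table by auto
    then show "g2cross y w \<bullet> x = 0" using inner_g2cross_swap[of y w x] uva by auto
    then show "x \<bullet> g2cross y w = 0" by (simp add: inner_commute)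
  qed
  have crossed: "g2cross x w \<bullet> g2cross y w = x \<bullet> y" if "x \<in> {u, v, ?a}" "y \<in> {u, v, ?a}" for x y
    using that uvw inner_g2cross_g2cross[of x w y] uva by auto
  show ?thesis
    using exhaust_7[of i] exhaust_7[of j]
    by (elim disjE) (simp_all add: uvw aa mixed crossed inner_commute)
qed

lemma orthogonal_matrix_g2_frame:
  assumes "special_triple u v w"
  shows "orthogonal_matrix (\<chi> i. g2_frame u v w i)"
  unfolding orthogonal_matrix_orthonormal_rows row_def norm_eq_1 orthogonal_def
  using special_triple_frame_orthonormal[OF assms] by (simp add: vec_lambda_eta)

lemma special_triple_extend:
  assumes "u \<bullet> u = 1" "v \<bullet> v = 1" "u \<bullet> v = 0"
  obtains w where "special_triple u v w"
proof -
  have "dim {u, v, g2cross u v} \<le> card {u, v, g2cross u v}" by (rule dim_le_card') simp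
  also have "\<dots> < DIM(real^7)" by (simp add: card_insert_if)
  finally obtain w where "w \<bullet> w = 1" "\<And>s. s \<in> {u, v, g2cross u v} \<Longrightarrow> s \<bullet> w = 0"
    by (rule exists_unit_orthogonal) auto
  then show ?thesis using assms by (intro that) (auto simp: special_triple_def)
qed

lemma g2_frame_std: "g2_frame (std 1) (std 2) (std 4) i = std i"
proof -
  have "g2cross (std 1) (std 2) = std 3" "g2cross (std 1) (std 4) = std 5"
    "g2cross (std 2) (std 4) = std 6" "g2cross (std 3) (std 4) = std 7"
    by (simp_all add: vec7_eq_iff g2cross_nth std_nth)
  then show ?thesis using exhaust_7[of i] by (elim disjE) simp_all
qed

lemma special_triple_std: "special_triple (std 1) (std 2) (std 4)"
  using g2_frame_std[of 3] unfolding special_triple_def by (simp add: inner_std_std)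

section \<open>Orientation of the frame\<close>

definition g2_frame_det :: "real^7 \<Rightarrow> real^7 \<Rightarrow> real^7 \<Rightarrow> real" where
  "g2_frame_det u v w = det (\<chi> i. g2_frame u v w i)"

lemma g2_frame_det_std: "g2_frame_det (std 1) (std 2) (std 4) = 1"
proof -
  have "(\<chi> i. std i) = (mat 1 :: real^7^7)" by (auto simp: std_nth mat_def vec_eq_iff)
  then show ?thesis unfolding g2_frame_det_def g2_frame_std by simp
qed

lemma g2_frame_det_path_constant:
  fixes p q r :: "real \<Rightarrow> real^7"
  assumes "continuous_on UNIV p" "continuous_on UNIV q" "continuous_on UNIV r"
    and "\<And>t. special_triple (p t) (q t) (r t)"
  shows "g2_frame_det (p s) (q s) (r s) = g2_frame_det (p t) (q t) (r t)"
  unfolding g2_frame_det_def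
proof (rule det_orthogonal_matrix_path_constant[where F = "\<lambda>t. \<chi> i. g2_frame (p t) (q t) (r t) i"])
  have "continuous_on UNIV (\<lambda>t. g2_frame (p t) (q t) (r t) i)" for i
    using exhaust_7[of i] by (elim disjE) (simp_all add: assms(1-3) continuous_intros)
  then show "continuous_on UNIV (\<lambda>t. \<chi> i. g2_frame (p t) (q t) (r t) i)"
    by (intro continuous_intros)
qed (simp_all add: orthogonal_matrix_g2_frame assms(4))

lemma special_triple_rotate_uv:
  assumes "special_triple u v w" "c\<^sup>2 + s\<^sup>2 = 1"
  shows "special_triple (c *\<^sub>R u + s *\<^sub>R v) (- s *\<^sub>R u + c *\<^sub>R v) w"
proof -
  have "g2cross (c *\<^sub>R u + s *\<^sub>R v) (- s *\<^sub>R u + c *\<^sub>R v) = (c\<^sup>2 + s\<^sup>2) *\<^sub>R g2cross u v"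
    using g2cross_commute[of v u] by (simp add: g2cross_linear algebra_simps power2_eq_square)
  with assms show ?thesis unfolding special_triple_def
    by (simp add: inner_add_left inner_add_right inner_commute algebra_simps flip: power2_eq_square)
qed

lemma special_triple_rotate_vw:
  assumes "special_triple u v w" "c\<^sup>2 + s\<^sup>2 = 1"
  shows "special_triple u (c *\<^sub>R v + s *\<^sub>R w) (- s *\<^sub>R v + c *\<^sub>R w)"
  using assms inner_g2cross_swap[of u w v] unfolding special_triple_def
  by (simp add: g2cross_linear inner_add_left inner_add_right inner_commute algebra_simps
      flip: power2_eq_square)

lemma special_triple_rotate_w:
  assumes "special_triple u v w" "special_triple u v x" "w \<bullet> x = 0" "c\<^sup>2 + s\<^sup>2 = 1"
  shows "special_triple u v (c *\<^sub>R w + s *\<^sub>R x)"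
  using assms unfolding special_triple_def
  by (simp add: inner_add_left inner_add_right inner_commute algebra_simps flip: power2_eq_square)

lemma special_triple_rotate_v_uv:
  assumes "special_triple u v w" "c\<^sup>2 + s\<^sup>2 = 1"
  shows "special_triple u (c *\<^sub>R v + s *\<^sub>R g2cross u v) w"
proof -
  have uvw: "u \<bullet> u = 1" "v \<bullet> v = 1" "u \<bullet> v = 0" "u \<bullet> w = 0" "v \<bullet> w = 0" "g2cross u v \<bullet> w = 0"
    using assms(1) unfolding special_triple_def by auto
  have "g2cross u v \<bullet> g2cross u v = 1" using inner_g2cross_orthonormal uvw by blast
  moreover have "g2cross u (g2cross u v) = - v" using uvw by (simp add: g2cross_g2cross_orthonormal)
  ultimately show ?thesis using assms uvw unfolding special_triple_def
    by (simp add: g2cross_linear inner_add_left inner_add_right inner_commute algebra_simps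
        flip: power2_eq_square)
qed

lemma g2_frame_det_rotate_uv:
  assumes "special_triple u v w"
  shows "g2_frame_det u v w = g2_frame_det (cos \<theta> *\<^sub>R u + sin \<theta> *\<^sub>R v) (- sin \<theta> *\<^sub>R u + cos \<theta> *\<^sub>R v) w"
  using g2_frame_det_path_constant[of "\<lambda>t. cos t *\<^sub>R u + sin t *\<^sub>R v" "\<lambda>t. - sin t *\<^sub>R u + cos t *\<^sub>R v"
      "\<lambda>t. w" 0 \<theta>] special_triple_rotate_uv[OF assms sin_cos_squared_add2]
  by (simp add: continuous_intros)

lemma g2_frame_det_rotate_vw:
  assumes "special_triple u v w"
  shows "g2_frame_det u v w = g2_frame_det u (cos \<theta> *\<^sub>R v + sin \<theta> *\<^sub>R w) (- sin \<theta> *\<^sub>R v + cos \<theta> *\<^sub>R w)"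
  using g2_frame_det_path_constant[of "\<lambda>t. u" "\<lambda>t. cos t *\<^sub>R v + sin t *\<^sub>R w"
      "\<lambda>t. - sin t *\<^sub>R v + cos t *\<^sub>R w" 0 \<theta>] special_triple_rotate_vw[OF assms sin_cos_squared_add2]
  by (simp add: continuous_intros)

lemma g2_frame_det_rotate_w:
  assumes "special_triple u v w" "special_triple u v x" "w \<bullet> x = 0"
  shows "g2_frame_det u v w = g2_frame_det u v (cos \<theta> *\<^sub>R w + sin \<theta> *\<^sub>R x)"
  using g2_frame_det_path_constant[of "\<lambda>t. u" "\<lambda>t. v" "\<lambda>t. cos t *\<^sub>R w + sin t *\<^sub>R x" 0 \<theta>]
    special_triple_rotate_w[OF assms sin_cos_squared_add2]
  by (simp add: continuous_intros)

lemma g2_frame_det_rotate_v_uv: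
  assumes "special_triple u v w"
  shows "g2_frame_det u v w = g2_frame_det u (cos \<theta> *\<^sub>R v + sin \<theta> *\<^sub>R g2cross u v) w"
  using g2_frame_det_path_constant[of "\<lambda>t. u" "\<lambda>t. cos t *\<^sub>R v + sin t *\<^sub>R g2cross u v" "\<lambda>t. w" 0 \<theta>]
    special_triple_rotate_v_uv[OF assms sin_cos_squared_add2]
  by (simp add: continuous_intros)

lemma g2_frame_det_eq_same_uv:
  assumes "special_triple u v w" "special_triple u v w'"
  shows "g2_frame_det u v w = g2_frame_det u v w'"
proof -
  have uvw: "u \<bullet> u = 1" "v \<bullet> v = 1" "w \<bullet> w = 1" "u \<bullet> v = 0" "u \<bullet> w = 0" "v \<bullet> w = 0"
    "g2cross u v \<bullet> w = 0" "w' \<bullet> w' = 1" "u \<bullet> w' = 0" "v \<bullet> w' = 0" "g2cross u v \<bullet> w' = 0"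
    using assms unfolding special_triple_def by auto
  have "g2cross u w \<bullet> g2cross u w = 1" "w \<bullet> g2cross u w = 0"
    using inner_g2cross_orthonormal uvw by simp_all
  then obtain \<theta> x where x: "x \<bullet> x = 1" "w \<bullet> x = 0" "w' = cos \<theta> *\<^sub>R w + sin \<theta> *\<^sub>R x"
    "\<And>z. z \<bullet> w = 0 \<Longrightarrow> z \<bullet> w' = 0 \<Longrightarrow> z \<bullet> g2cross u w = 0 \<Longrightarrow> z \<bullet> x = 0"
    using unit_vector_rotation[of w w' "g2cross u w"] uvw by metis
  have "v \<bullet> g2cross u w = 0" using inner_g2cross_swap[of u w v] uvw by (simp add: inner_commute)
  moreover have "g2cross u v \<bullet> g2cross u w = 0"
    using inner_g2cross_g2cross[of v u w] g2cross_commute[of v u] g2cross_commute[of w u] uvw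
    by (simp add: inner_commute)
  ultimately have "u \<bullet> x = 0" "v \<bullet> x = 0" "g2cross u v \<bullet> x = 0"
    using x(4)[of u] x(4)[of v] x(4)[of "g2cross u v"] uvw by (simp_all add: inner_commute)
  then have "special_triple u v x"
    using x(1) uvw unfolding special_triple_def by (simp add: inner_commute)
  then show ?thesis using g2_frame_det_rotate_w[OF assms(1) _ x(2)] x(3) by simp
qed

lemma special_triple_polar_decomposition:
  assumes "special_triple u v w" "v' \<bullet> v' = 1" "u \<bullet> v' = 0"
  obtains y \<theta>1 \<theta>2 where "special_triple u v y"
    "v' = cos \<theta>2 *\<^sub>R (cos \<theta>1 *\<^sub>R v + sin \<theta>1 *\<^sub>R g2cross u v) + sin \<theta>2 *\<^sub>R y"
proof -
  let ?a = "g2cross u v"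
  have uvw: "u \<bullet> u = 1" "v \<bullet> v = 1" "w \<bullet> w = 1" "u \<bullet> v = 0" "u \<bullet> w = 0" "v \<bullet> w = 0" "?a \<bullet> w = 0"
    using assms(1) unfolding special_triple_def by auto
  have aa: "?a \<bullet> ?a = 1" using inner_g2cross_orthonormal uvw by blast
  obtain \<theta> x where x: "x \<bullet> x = 1" "v \<bullet> x = 0" "v' = cos \<theta> *\<^sub>R v + sin \<theta> *\<^sub>R x"
    "\<And>z. z \<bullet> v = 0 \<Longrightarrow> z \<bullet> v' = 0 \<Longrightarrow> z \<bullet> w = 0 \<Longrightarrow> z \<bullet> x = 0"
    using unit_vector_rotation[of v v' w] uvw assms(2) by metis
  obtain \<phi> y where y: "y \<bullet> y = 1" "?a \<bullet> y = 0" "x = cos \<phi> *\<^sub>R ?a + sin \<phi> *\<^sub>R y"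
    "\<And>z. z \<bullet> ?a = 0 \<Longrightarrow> z \<bullet> x = 0 \<Longrightarrow> z \<bullet> w = 0 \<Longrightarrow> z \<bullet> y = 0"
    using unit_vector_rotation[of ?a x w] aa x(1) uvw by (metis inner_commute)
  have "u \<bullet> x = 0" using x(4) uvw assms(3) by simp
  then have uvy: "special_triple u v y"
    using y x(2) uvw unfolding special_triple_def by (simp add: inner_commute)
  have "(sin \<theta> * cos \<phi>)\<^sup>2 + (sin \<theta> * sin \<phi>)\<^sup>2 = (sin \<theta>)\<^sup>2 * ((cos \<phi>)\<^sup>2 + (sin \<phi>)\<^sup>2)"
    by (simp only: power_mult_distrib distrib_left)
  also have "\<dots> = (sin \<theta>)\<^sup>2" by simp
  finally have "(cos \<theta>)\<^sup>2 + (sin \<theta> * cos \<phi>)\<^sup>2 + (sin \<theta> * sin \<phi>)\<^sup>2 = 1"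
    using sin_cos_squared_add2[of \<theta>] by linarith
  then obtain \<theta>1 \<theta>2 where \<theta>: "cos \<theta> = cos \<theta>2 * cos \<theta>1" "sin \<theta> * cos \<phi> = cos \<theta>2 * sin \<theta>1"
    "sin \<theta> * sin \<phi> = sin \<theta>2"
    by (rule sphere_polar_coordinates)
  have "v' = cos \<theta> *\<^sub>R v + (sin \<theta> * cos \<phi>) *\<^sub>R ?a + (sin \<theta> * sin \<phi>) *\<^sub>R y"
    unfolding x(3) y(3) by (simp add: algebra_simps)
  then have "v' = cos \<theta>2 *\<^sub>R (cos \<theta>1 *\<^sub>R v + sin \<theta>1 *\<^sub>R ?a) + sin \<theta>2 *\<^sub>R y"
    unfolding \<theta> by (simp add: algebra_simps)
  with uvy show ?thesis by (rule that)
qed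

lemma g2_frame_det_eq_same_u:
  assumes "special_triple u v w" "special_triple u v' w'"
  shows "g2_frame_det u v w = g2_frame_det u v' w'"
proof -
  have "v' \<bullet> v' = 1" "u \<bullet> v' = 0" using assms(2) unfolding special_triple_def by auto
  then obtain y \<theta>1 \<theta>2 where uvy: "special_triple u v y"
    and v': "v' = cos \<theta>2 *\<^sub>R (cos \<theta>1 *\<^sub>R v + sin \<theta>1 *\<^sub>R g2cross u v) + sin \<theta>2 *\<^sub>R y"
    using special_triple_polar_decomposition[OF assms(1)] by metis
  define v1 where "v1 = cos \<theta>1 *\<^sub>R v + sin \<theta>1 *\<^sub>R g2cross u v"
  have uv1y: "special_triple u v1 y" unfolding v1_def
    by (rule special_triple_rotate_v_uv[OF uvy sin_cos_squared_add2])
  have "g2_frame_det u v w = g2_frame_det u v y"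
    by (rule g2_frame_det_eq_same_uv[OF assms(1) uvy])
  also have "\<dots> = g2_frame_det u v1 y"
    unfolding v1_def by (rule g2_frame_det_rotate_v_uv[OF uvy])
  also have "\<dots> = g2_frame_det u v' (- sin \<theta>2 *\<^sub>R v1 + cos \<theta>2 *\<^sub>R y)"
    unfolding v' v1_def[symmetric] by (rule g2_frame_det_rotate_vw[OF uv1y])
  also have "\<dots> = g2_frame_det u v' w'"
  proof (rule g2_frame_det_eq_same_uv[OF _ assms(2)])
    show "special_triple u v' (- sin \<theta>2 *\<^sub>R v1 + cos \<theta>2 *\<^sub>R y)"
      unfolding v' v1_def[symmetric] by (rule special_triple_rotate_vw[OF uv1y sin_cos_squared_add2])
  qed
  finally show ?thesis .
qed

lemma g2_frame_det_eq_1: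
  assumes "special_triple u v w"
  shows "g2_frame_det u v w = 1"
proof -
  have uv: "u \<bullet> u = 1" "v \<bullet> v = 1" "u \<bullet> v = 0" using assms unfolding special_triple_def by auto
  obtain \<theta> x where x: "x \<bullet> x = 1" "u \<bullet> x = 0" "std 1 = cos \<theta> *\<^sub>R u + sin \<theta> *\<^sub>R x"
    using unit_vector_rotation[of u "std 1" v] uv by (metis inner_std_std)
  obtain w1 where uxw1: "special_triple u x w1" using special_triple_extend[OF uv(1) x(1,2)] .
  have "g2_frame_det u v w = g2_frame_det u x w1"
    by (rule g2_frame_det_eq_same_u[OF assms uxw1])
  also have "\<dots> = g2_frame_det (std 1) (- sin \<theta> *\<^sub>R u + cos \<theta> *\<^sub>R x) w1"
    unfolding x(3) by (rule g2_frame_det_rotate_uv[OF uxw1])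
  also have "\<dots> = g2_frame_det (std 1) (std 2) (std 4)"
  proof (rule g2_frame_det_eq_same_u[OF _ special_triple_std])
    show "special_triple (std 1) (- sin \<theta> *\<^sub>R u + cos \<theta> *\<^sub>R x) w1"
      unfolding x(3) by (rule special_triple_rotate_uv[OF uxw1 sin_cos_squared_add2])
  qed
  finally show ?thesis by (simp add: g2_frame_det_std)
qed

lemma G2_adapted_frame_g2_frame:
  assumes "special_triple u v w"
  shows "G2_adapted_frame (g2_frame u v w)"
  using special_triple_frame_orthonormal[OF assms] g2_frame_det_eq_1[OF assms]
  unfolding G2_adapted_frame_def g2_frame_det_def by simp

section \<open>Elements of g2 in a frame adapted to their kernel\<close>

lemma skew_form_eq_inner_form_op:
  assumes "skew_form X"
  shows "X a b = form_op X a \<bullet> b"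
proof -
  have lin: "linear (X a)" using assms unfolding skew_form_def bilinear_def by blast
  have "X a b = X a (\<Sum>i\<in>UNIV. b$i *\<^sub>R std i)"
    using basis_expansion[of b] by (simp add: std_def scalar_mult_eq_scaleR)
  also have "\<dots> = (\<Sum>i\<in>UNIV. b$i * X a (std i))"
    by (simp add: linear_sum[OF lin] linear_scale[OF lin])
  also have "\<dots> = form_op X a \<bullet> b"
    by (simp add: form_op_def inner_vec_def mult.commute)
  finally show ?thesis .
qed

lemma form_op_eq_0_if_orthogonal_range:
  assumes "skew_form X" "\<And>b. x \<bullet> form_op X b = 0"
  shows "form_op X x = 0"
proof -
  have "form_op X x \<bullet> form_op X x = X x (form_op X x)"
    by (simp add: skew_form_eq_inner_form_op[OF assms(1)])
  also have "\<dots> = - X (form_op X x) x"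
    using assms(1) unfolding skew_form_def by blast
  also have "\<dots> = - (x \<bullet> form_op X (form_op X x))"
    by (simp add: skew_form_eq_inner_form_op[OF assms(1)] inner_commute)
  finally show ?thesis using assms(2) by simp
qed

lemma skew_form_kernel_orthonormal_pair:
  assumes "skew_form X" "form_rank X \<le> 5"
  obtains u v where "u \<bullet> u = 1" "v \<bullet> v = 1" "u \<bullet> v = 0" "form_op X u = 0" "form_op X v = 0"
proof -
  let ?R = "range (form_op X)"
  have "dim ?R < DIM(real^7)" using assms(2) unfolding form_rank_def by simp
  then obtain u where u: "u \<bullet> u = 1" "\<And>s. s \<in> ?R \<Longrightarrow> s \<bullet> u = 0"
    by (rule exists_unit_orthogonal) blast
  have "dim (insert u ?R) < DIM(real^7)"
    using assms(2) unfolding form_rank_def dim_insert by simp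
  then obtain v where v: "v \<bullet> v = 1" "\<And>s. s \<in> insert u ?R \<Longrightarrow> s \<bullet> v = 0"
    by (rule exists_unit_orthogonal) blast
  show ?thesis
  proof (rule that[OF u(1) v(1)])
    show "u \<bullet> v = 0" using v(2) by simp
    have "u \<bullet> form_op X b = 0" "v \<bullet> form_op X b = 0" for b
      using u(2)[of "form_op X b"] v(2)[of "form_op X b"] by (simp_all add: inner_commute)
    then show "form_op X u = 0" "form_op X v = 0"
      by (simp_all add: form_op_eq_0_if_orthogonal_range[OF assms(1)])
  qed
qed

lemma in_g2_kernel_g2cross:
  assumes "in_g2 X" "form_op X u = 0" "form_op X v = 0"
  shows "form_op X (g2cross u v) = 0"
  using assms unfolding in_g2_def by simp

lemma in_g2_g2cross_kernel_left:
  assumes "in_g2 X" "form_op X x = 0"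
  shows "X (g2cross x w) g = - X w (g2cross x g)"
proof -
  have sk: "skew_form X" using assms(1) unfolding in_g2_def by blast
  have "form_op X (g2cross x w) = g2cross x (form_op X w)"
    using assms unfolding in_g2_def by simp
  then have "X (g2cross x w) g = g2cross x (form_op X w) \<bullet> g"
    by (simp add: skew_form_eq_inner_form_op[OF sk])
  also have "\<dots> = - (g2cross x g \<bullet> form_op X w)" by (rule inner_g2cross_swap)
  also have "\<dots> = - X w (g2cross x g)" by (simp add: skew_form_eq_inner_form_op[OF sk] inner_commute)
  finally show ?thesis .
qed

lemma frame_matrix_g2_frame:
  assumes "in_g2 X" "special_triple u v w" "form_op X u = 0" "form_op X v = 0"
  shows "frame_matrix X (g2_frame u v w) =
    normal_form (X (g2cross u w) w) (X (g2cross v w) w) (X (g2cross (g2cross u v) w) w)"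
proof -
  let ?a = "g2cross u v"
  have sk: "skew_form X" using assms(1) unfolding in_g2_def by blast
  have skew: "X g h = - X h g" for g h using sk unfolding skew_form_def by blast
  have uvw: "u \<bullet> u = 1" "v \<bullet> v = 1" "w \<bullet> w = 1" "u \<bullet> v = 0" "u \<bullet> w = 0" "v \<bullet> w = 0"
    "?a \<bullet> w = 0" using assms(2) unfolding special_triple_def by auto
  have kernel: "form_op X x = 0" if "x \<in> {u, v, ?a}" for x
    using that assms(3,4) in_g2_kernel_g2cross[OF assms(1,3,4)] by auto
  have X_kernel: "X x g = 0" "X g x = 0" if "x \<in> {u, v, ?a}" for x g
    using kernel[OF that] skew[of g x] by (simp_all add: skew_form_eq_inner_form_op[OF sk])
  have X_cross: "X (g2cross x w) g = - X w (g2cross x g)" if "x \<in> {u, v, ?a}" for x g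
    using in_g2_g2cross_kernel_left[OF assms(1) kernel[OF that]] .
  have X_lin: "X w w = 0" "X w 0 = 0" "X w (- g) = - X w g" for g
    using skew[of w w] by (simp_all add: skew_form_eq_inner_form_op[OF sk])
  note table = g2cross_orthonormal_table[OF uvw(1,2,4)]
  have orth: "?a \<bullet> ?a = 1" "u \<bullet> ?a = 0" "v \<bullet> ?a = 0" "?a \<bullet> u = 0" "?a \<bullet> v = 0" "v \<bullet> u = 0"
    using inner_g2cross_orthonormal[OF uvw(1,2,4)] uvw by (simp_all add: inner_commute)
  have cross_w: "g2cross x (g2cross x w) = - w" if "x \<in> {u, v, ?a}" for x
    using that uvw orth by (auto intro: g2cross_g2cross_orthonormal)
  have assoc_w: "g2cross x (g2cross y w) = - g2cross (g2cross x y) w"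
    if "x \<in> {u, v, ?a}" "y \<in> {u, v, ?a}" "x \<bullet> y = 0" for x y
    using that uvw by (auto intro!: g2cross_assoc_orthogonal simp: inner_commute)
  have "frame_matrix X (g2_frame u v w) =
    normal_form (- X w (g2cross u w)) (- X w (g2cross v w)) (- X w (g2cross ?a w))"
    unfolding frame_matrix_def normal_form_def vec_eq_iff forall_7
    by (simp add: X_kernel X_cross X_lin cross_w assoc_w table uvw orth bilinear_lneg[OF bilinear_g2cross] blk_def)
  then show ?thesis
    using skew[of w "g2cross u w"] skew[of w "g2cross v w"] skew[of w "g2cross ?a w"] by simp
qed

theorem corollary3p2:
  fixes X :: "real^7 \<Rightarrow> real^7 \<Rightarrow> real"
  assumes "in_g2 X" and "form_rank X \<le> 4"
  shows "\<exists>f. G2_adapted_frame f \<and> (\<exists>a b c. frame_matrix X f = normal_form a b c)"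
proof -
  have "skew_form X" "form_rank X \<le> 5" using assms unfolding in_g2_def by auto
  then obtain u v where uv: "u \<bullet> u = 1" "v \<bullet> v = 1" "u \<bullet> v = 0" "form_op X u = 0" "form_op X v = 0"
    by (rule skew_form_kernel_orthonormal_pair)
  obtain w where uvw: "special_triple u v w" using special_triple_extend[OF uv(1-3)] .
  show ?thesis
    using G2_adapted_frame_g2_frame[OF uvw] frame_matrix_g2_frame[OF assms(1) uvw uv(4,5)] by blast
qed

end
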